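(* Let $\mathscr D:\mathscr N=\mathscr N_1\cup\cdots\cup\mathscr N_k$ be a pairwise binary-sized decomposition of a chemical reaction network $\mathscr N$ such that at least one linkage class of $\mathscr N$ does not contain a common complex. Let $\mathscr N'$ and $\mathscr N'_i$ be the networks obtained by removing from $\mathscr N$ and $\mathscr N_i$, respectively, their $\mathscr C_{\mathscr D}$-linkage classes. Then $\mathscr D':\mathscr N'=\mathscr N'_1\cup\cdots\cup\mathscr N'_k$ is a $\mathscr C$-decomposition if $\mathscr D'$ is non-trivial.
   Context: A CRN $\mathscr N=(\mathscr S,\mathscr C,\mathscr R)$ is viewed as a directed graph on its complexes with arcs its reactions; linkage classes are the connected components of the underlying undirected graph. A decomposition $\mathscr N=\mathscr N_1\cup\cdots\cup\mathscr N_k$ is given by a partition $\{\mathscr R_1,\dots,\mathscr R_k\}$ of the reaction set; the subnetwork $\mathscr N_i$ has reactions $\mathscr R_i$ and complex set $\mathscr C_i$ the complexes occurring in reactions of $\mathscr R_i$. The length of a decomposition is the number of (nonempty) subnetworks; it is empty if the length is 0, trivial if the length is 1, and non-trivial otherwise. The set $\mathscr C_{\mathscr D}$ of common complexes consists of the complexes lying in the complex sets of at least two distinct subnetworks; $d=|\mathscr C_{\mathscr D}|$. A $\mathscr C_{\mathscr D}$-linkage class (of $\mathscr N$ or of some $\mathscr N_i$) is a linkage class containing an element of $\mathscr C_{\mathscr D}$; removing linkage classes means removing their reactions (and complexes). The decomposition is pairwise binary-sized if there are integers $0\le b\le c\le d$ with $|\mathscr C_i\cap\mathscr C_j|\in\{b,c\}$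 for all $i\ne j$. A $\mathscr C$-decomposition is a decomposition in which the complex sets of distinct subnetworks are pairwise disjoint. *)

theory Defs
  imports Main
begin

(* A CRN is represented by its finite set of reactions R :: ('c * 'c) set,
   a reaction (y, y') going from reactant complex y to product complex y'.
   Complexes are elements of an abstract type 'c (species play no role here). *)

definition crn :: "('c \<times> 'c) set \<Rightarrow> bool" where
  "crn R \<longleftrightarrow> finite R \<and> (\<forall>(y, y') \<in> R. y \<noteq> y')"

definition complexes :: "('c \<times> 'c) set \<Rightarrow> 'c set" where
  "complexes R = fst ` R \<union> snd ` R"

definition ulink :: "('c \<times> 'c) set \<Rightarrow> ('c \<times> 'c) set" where
  "ulink R = (R \<union> R\<inverse>)\<^sup>*"

definition linkage_classes :: "('c \<times> 'c) set \<Rightarrow> 'c set set" where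
  "linkage_classes R = {ulink R `` {y} | y. y \<in> complexes R}"

(* decomposition given by subnetworks Rs 1, ..., Rs k: a partition of the reaction set
   (empty blocks tolerated; they do not count towards the length) *)
definition is_decomposition :: "('c \<times> 'c) set \<Rightarrow> nat \<Rightarrow> (nat \<Rightarrow> ('c \<times> 'c) set) \<Rightarrow> bool" where
  "is_decomposition R k Rs \<longleftrightarrow>
     (\<Union>i\<in>{1..k}. Rs i) = R \<and>
     (\<forall>i\<in>{1..k}. \<forall>j\<in>{1..k}. i \<noteq> j \<longrightarrow> Rs i \<inter> Rs j = {})"

definition decomp_length :: "nat \<Rightarrow> (nat \<Rightarrow> ('c \<times> 'c) set) \<Rightarrow> nat" where
  "decomp_length k Rs = card {i\<in>{1..k}. Rs i \<noteq> {}}"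

definition nontrivial_decomp :: "nat \<Rightarrow> (nat \<Rightarrow> ('c \<times> 'c) set) \<Rightarrow> bool" where
  "nontrivial_decomp k Rs \<longleftrightarrow> decomp_length k Rs \<ge> 2"

definition common_complexes :: "nat \<Rightarrow> (nat \<Rightarrow> ('c \<times> 'c) set) \<Rightarrow> 'c set" where
  "common_complexes k Rs = {y. \<exists>i\<in>{1..k}. \<exists>j\<in>{1..k}. i \<noteq> j \<and>
      y \<in> complexes (Rs i) \<and> y \<in> complexes (Rs j)}"

definition pairwise_binary_sized :: "nat \<Rightarrow> (nat \<Rightarrow> ('c \<times> 'c) set) \<Rightarrow> bool" where
  "pairwise_binary_sized k Rs \<longleftrightarrow>
     (\<exists>b c. b \<le> c \<and> c \<le> card (common_complexes k Rs) \<and>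
        (\<forall>i\<in>{1..k}. \<forall>j\<in>{1..k}. i \<noteq> j \<longrightarrow>
           card (complexes (Rs i) \<inter> complexes (Rs j)) \<in> {b, c}))"

definition remove_linkage_classes_meeting :: "'c set \<Rightarrow> ('c \<times> 'c) set \<Rightarrow> ('c \<times> 'c) set" where
  "remove_linkage_classes_meeting CD R =
     {r \<in> R. \<forall>L\<in>linkage_classes R. fst r \<in> L \<longrightarrow> L \<inter> CD = {}}"

definition is_C_decomposition :: "('c \<times> 'c) set \<Rightarrow> nat \<Rightarrow> (nat \<Rightarrow> ('c \<times> 'c) set) \<Rightarrow> bool" where
  "is_C_decomposition R k Rs \<longleftrightarrow> is_decomposition R k Rs \<and>
     (\<forall>i\<in>{1..k}. \<forall>j\<in>{1..k}. i \<noteq> j \<longrightarrow> complexes (Rs i) \<inter> complexes (Rs j) = {})"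

end

theory Submission
  imports Defs
begin

text \<open>After removing the \<open>\<C>\<^sub>\<D>\<close>-linkage classes no common complex is left in any subnetwork,
  so distinct subnetworks cannot share a complex. The only point needing care is that the removals
  in \<open>\<N>\<close> and in the \<open>\<N>\<^sub>i\<close> agree: a linkage class of \<open>\<N>\<^sub>i\<close> free of common complexes cannot be
  left by a reaction of another subnetwork (its first complex outside \<open>\<N>\<^sub>i\<close> would be common), so it
  is already a linkage class of \<open>\<N>\<close>.\<close>

lemma ulink_mono: "S \<subseteq> T \<Longrightarrow> ulink S \<subseteq> ulink T"
  unfolding ulink_def by (rule rtrancl_mono) blast

lemma equiv_ulink: "equiv UNIV (ulink S)"
  unfolding ulink_def equiv_def
  by (simp add: refl_rtrancl sym_rtrancl[OF sym_Un_converse] trans_rtrancl)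

lemma linkage_classes_eq: "linkage_classes S = (\<lambda>y. ulink S `` {y}) ` complexes S"
  unfolding linkage_classes_def by blast

lemma complexes_mono: "S \<subseteq> T \<Longrightarrow> complexes S \<subseteq> complexes T"
  unfolding complexes_def by blast

lemma fst_in_complexes: "r \<in> S \<Longrightarrow> fst r \<in> complexes S"
  unfolding complexes_def by blast

lemma in_complexes_ulink_fst:
  assumes "y \<in> complexes S"
  obtains r where "r \<in> S" "(fst r, y) \<in> ulink S"
  using assms unfolding complexes_def ulink_def by (force intro: r_into_rtrancl)

lemma ulink_complexes:
  assumes "(x, y) \<in> ulink S" "x \<in> complexes S"
  shows "y \<in> complexes S"
  using assms unfolding ulink_def
  by (induction rule: rtrancl_induct) (force simp: complexes_def)+

lemma in_complexes_if_linked: "(y, z) \<in> S \<union> S\<inverse> \<Longrightarrow> y \<in> complexes S"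
  unfolding complexes_def by force

lemma mem_linkage_classes_iff:
  assumes "L \<in> linkage_classes S"
  shows "x \<in> L \<longleftrightarrow> L = ulink S `` {x}"
proof -
  obtain y where "L = ulink S `` {y}"
    using assms unfolding linkage_classes_eq by blast
  then show ?thesis
    by (simp add: equiv_class_eq_iff[OF equiv_ulink])
qed

lemma mem_remove_linkage_classes_meeting_iff:
  "r \<in> remove_linkage_classes_meeting CD S \<longleftrightarrow> r \<in> S \<and> ulink S `` {fst r} \<inter> CD = {}"
proof (cases "r \<in> S")
  case True
  then have "ulink S `` {fst r} \<in> linkage_classes S"
    unfolding linkage_classes_eq using fst_in_complexes by blast
  then show ?thesis
    unfolding remove_linkage_classes_meeting_def
    using True mem_linkage_classes_iff[of _ S "fst r"] by auto
next
  case False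
  then show ?thesis
    unfolding remove_linkage_classes_meeting_def by blast
qed

lemma remove_linkage_classes_meeting_subset: "remove_linkage_classes_meeting CD S \<subseteq> S"
  using mem_remove_linkage_classes_meeting_iff by blast

lemma complexes_remove_linkage_classes_meeting_disjoint:
  "complexes (remove_linkage_classes_meeting CD S) \<inter> CD = {}"
proof (intro equals0I)
  fix y assume y: "y \<in> complexes (remove_linkage_classes_meeting CD S) \<inter> CD"
  then obtain r where r: "r \<in> remove_linkage_classes_meeting CD S"
    and "(fst r, y) \<in> ulink (remove_linkage_classes_meeting CD S)"
    by (blast elim: in_complexes_ulink_fst)
  then have "y \<in> ulink S `` {fst r}"
    using ulink_mono[OF remove_linkage_classes_meeting_subset] by blast
  with y r show False
    unfolding mem_remove_linkage_classes_meeting_iff by blast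
qed

lemma is_decomposition_subset:
  "is_decomposition R k Rs \<Longrightarrow> i \<in> {1..k} \<Longrightarrow> Rs i \<subseteq> R"
  unfolding is_decomposition_def by (metis UN_upper)

lemma is_decomposition_disjoint:
  "is_decomposition R k Rs \<Longrightarrow> i \<in> {1..k} \<Longrightarrow> j \<in> {1..k} \<Longrightarrow> i \<noteq> j \<Longrightarrow> Rs i \<inter> Rs j = {}"
  unfolding is_decomposition_def by blast

lemma is_decomposition_reaction_obtain:
  assumes "is_decomposition R k Rs" "r \<in> R"
  obtains i where "i \<in> {1..k}" "r \<in> Rs i"
  using assms unfolding is_decomposition_def by blast

lemma ulink_decomposition_subnetwork:
  assumes dec: "is_decomposition R k Rs" and i: "i \<in> {1..k}"
    and x: "x \<in> complexes (Rs i)"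
    and free: "ulink (Rs i) `` {x} \<inter> common_complexes k Rs = {}"
    and xz: "(x, z) \<in> ulink R"
  shows "(x, z) \<in> ulink (Rs i)"
  using xz unfolding ulink_def
proof (induction rule: rtrancl_induct)
  case base
  show ?case by simp
next
  case (step y z)
  have xy: "(x, y) \<in> ulink (Rs i)"
    using step.IH unfolding ulink_def .
  obtain j where j: "j \<in> {1..k}" and yz: "(y, z) \<in> Rs j \<union> (Rs j)\<inverse>"
  proof (cases "(y, z) \<in> R")
    case True
    then show ?thesis
      using that is_decomposition_reaction_obtain[OF dec] by blast
  next
    case False
    then have "(z, y) \<in> R" using step.hyps(2) by blast
    then show ?thesis
      using that is_decomposition_reaction_obtain[OF dec] by blast
  qed
  have "j = i"
  proof (rule ccontr)
    assume "j \<noteq> i"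
    have "y \<in> complexes (Rs i)"
      using xy x by (rule ulink_complexes)
    moreover have "y \<in> complexes (Rs j)"
      using yz by (rule in_complexes_if_linked)
    ultimately have "y \<in> common_complexes k Rs"
      using i j \<open>j \<noteq> i\<close> unfolding common_complexes_def by blast
    moreover have "y \<in> ulink (Rs i) `` {x}"
      using xy by blast
    ultimately show False
      using free by blast
  qed
  with yz have "(y, z) \<in> Rs i \<union> (Rs i)\<inverse>"
    by simp
  with step.IH show ?case
    by (rule rtrancl.rtrancl_into_rtrancl)
qed

lemma remove_common_linkage_classes_subnetwork_iff:
  assumes dec: "is_decomposition R k Rs" and i: "i \<in> {1..k}" and r: "r \<in> Rs i"
  shows "r \<in> remove_linkage_classes_meeting (common_complexes k Rs) (Rs i) \<longleftrightarrow>
    r \<in> remove_linkage_classes_meeting (common_complexes k Rs) R"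
proof -
  have "Rs i \<subseteq> R"
    using dec i by (rule is_decomposition_subset)
  then have "ulink (Rs i) `` {fst r} \<subseteq> ulink R `` {fst r}"
    using ulink_mono by blast
  moreover have "ulink R `` {fst r} \<subseteq> ulink (Rs i) `` {fst r}"
    if "ulink (Rs i) `` {fst r} \<inter> common_complexes k Rs = {}"
    using ulink_decomposition_subnetwork[OF dec i fst_in_complexes[OF r] that] by blast
  ultimately show ?thesis
    using r \<open>Rs i \<subseteq> R\<close> unfolding mem_remove_linkage_classes_meeting_iff by blast
qed

lemma is_decomposition_remove_common_linkage_classes:
  assumes dec: "is_decomposition R k Rs"
  shows "is_decomposition (remove_linkage_classes_meeting (common_complexes k Rs) R) k
    (\<lambda>i. remove_linkage_classes_meeting (common_complexes k Rs) (Rs i))"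
proof -
  let ?rem = "remove_linkage_classes_meeting (common_complexes k Rs)"
  have "(\<Union>i\<in>{1..k}. ?rem (Rs i)) = ?rem R"
  proof (intro equalityI subsetI)
    fix r assume "r \<in> (\<Union>i\<in>{1..k}. ?rem (Rs i))"
    then obtain i where i: "i \<in> {1..k}" and r: "r \<in> ?rem (Rs i)" by blast
    then have "r \<in> Rs i"
      using remove_linkage_classes_meeting_subset by blast
    with r show "r \<in> ?rem R"
      using remove_common_linkage_classes_subnetwork_iff[OF dec i] by blast
  next
    fix r assume r: "r \<in> ?rem R"
    then have "r \<in> R"
      using remove_linkage_classes_meeting_subset by blast
    then obtain i where i: "i \<in> {1..k}" and "r \<in> Rs i"
      by (rule is_decomposition_reaction_obtain[OF dec])
    with r have "r \<in> ?rem (Rs i)"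
      using remove_common_linkage_classes_subnetwork_iff[OF dec i] by blast
    with i show "r \<in> (\<Union>i\<in>{1..k}. ?rem (Rs i))" by blast
  qed
  moreover have "?rem (Rs i) \<inter> ?rem (Rs j) = {}"
    if "i \<in> {1..k}" "j \<in> {1..k}" "i \<noteq> j" for i j
  proof -
    have "Rs i \<inter> Rs j = {}"
      using dec that by (rule is_decomposition_disjoint)
    then show ?thesis
      using remove_linkage_classes_meeting_subset[of _ "Rs i"]
        remove_linkage_classes_meeting_subset[of _ "Rs j"] by blast
  qed
  ultimately show ?thesis
    unfolding is_decomposition_def by (intro conjI ballI impI)
qed

lemma complexes_remove_common_linkage_classes_disjoint:
  assumes "i \<in> {1..k}" "j \<in> {1..k}" "i \<noteq> j"
  shows "complexes (remove_linkage_classes_meeting (common_complexes k Rs) (Rs i)) \<inter>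
    complexes (remove_linkage_classes_meeting (common_complexes k Rs) (Rs j)) = {}"
proof (intro equals0I)
  let ?CD = "common_complexes k Rs"
  fix y assume y: "y \<in> complexes (remove_linkage_classes_meeting ?CD (Rs i)) \<inter>
    complexes (remove_linkage_classes_meeting ?CD (Rs j))"
  have "y \<in> complexes (Rs i)" "y \<in> complexes (Rs j)"
    using y complexes_mono[OF remove_linkage_classes_meeting_subset, of ?CD "Rs i"]
      complexes_mono[OF remove_linkage_classes_meeting_subset, of ?CD "Rs j"] by blast+
  with assms have "y \<in> ?CD"
    unfolding common_complexes_def by blast
  moreover have "y \<in> complexes (remove_linkage_classes_meeting ?CD (Rs i))"
    using y by blast
  ultimately show False
    using complexes_remove_linkage_classes_meeting_disjoint[of ?CD "Rs i"] by blast
qed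

theorem theorem5:
  fixes R :: "('c \<times> 'c) set" and k :: nat and Rs :: "nat \<Rightarrow> ('c \<times> 'c) set"
  assumes "crn R"
    and "is_decomposition R k Rs"
    and "pairwise_binary_sized k Rs"
    and "\<exists>L\<in>linkage_classes R. L \<inter> common_complexes k Rs = {}"
  defines "R' \<equiv> remove_linkage_classes_meeting (common_complexes k Rs) R"
    and "Rs' \<equiv> (\<lambda>i. remove_linkage_classes_meeting (common_complexes k Rs) (Rs i))"
  assumes "nontrivial_decomp k Rs'"
  shows "is_C_decomposition R' k Rs'"
  unfolding is_C_decomposition_def R'_def Rs'_def
  using is_decomposition_remove_common_linkage_classes[OF assms(2)]
    complexes_remove_common_linkage_classes_disjoint by (intro conjI ballI impI)

end
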